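(* Let $p$ be a prime and $\sigma$ a $p$-uniform morphism on $\mathcal A_m$. For every $n\in\mathbb{N}^*$, $$M_{\sigma^n}(T)=M_\sigma(T^{p^{n-1}})M_\sigma(T^{p^{n-2}})\cdots M_\sigma(T).$$
   Context: $\mathcal A_m=\{0,\dots,m-1\}$. For $W=w_0\cdots w_{r-1}\in\mathcal A_m^*$ and $j\in\mathcal A_m$, $\beta_{W,j}(T)=\sum_{i:\,w_i=j}T^{r-1-i}\in\mathbb{F}_p[T]$ (zero if $j$ does not occur). For a uniform morphism $\tau$ on $\mathcal A_m$, $M_\tau(T)=(\beta_{\tau(i),j}(T))_{0\le i,j\le m-1}$; $\sigma^n$ is again uniform (of length $p^n$). *)

theory Defs
  imports "Jordan_Normal_Form.Matrix" "HOL-Computational_Algebra.Polynomial"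
begin

text \<open>Letters of A_m are the naturals < m; words are lists. A morphism is a map
  sigma :: nat => nat list, extended to words by concatenation.\<close>

definition morph_ext :: "(nat \<Rightarrow> nat list) \<Rightarrow> nat list \<Rightarrow> nat list" where
  "morph_ext \<sigma> w = concat (map \<sigma> w)"

definition morph_pow :: "(nat \<Rightarrow> nat list) \<Rightarrow> nat \<Rightarrow> nat \<Rightarrow> nat list" where
  "morph_pow \<sigma> n i = (morph_ext \<sigma> ^^ n) [i]"

definition is_morphism :: "nat \<Rightarrow> (nat \<Rightarrow> nat list) \<Rightarrow> bool" where
  "is_morphism m \<sigma> \<longleftrightarrow> (\<forall>i<m. set (\<sigma> i) \<subseteq> {..<m})"

definition is_uniform_morphism :: "nat \<Rightarrow> nat \<Rightarrow> (nat \<Rightarrow> nat list) \<Rightarrow> bool" where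
  "is_uniform_morphism m L \<sigma> \<longleftrightarrow> is_morphism m \<sigma> \<and> (\<forall>i<m. length (\<sigma> i) = L)"

definition beta :: "nat list \<Rightarrow> nat \<Rightarrow> 'a::comm_semiring_1 poly" where
  "beta W j = (\<Sum>i<length W. if W ! i = j then monom 1 (length W - 1 - i) else 0)"

definition Mmat :: "nat \<Rightarrow> (nat \<Rightarrow> nat list) \<Rightarrow> 'a::comm_semiring_1 poly mat" where
  "Mmat m \<tau> = mat m m (\<lambda>(i, j). beta (\<tau> i) j)"

definition subst_pow :: "nat \<Rightarrow> 'a::comm_semiring_1 poly mat \<Rightarrow> 'a poly mat" where
  "subst_pow k M = map_mat (\<lambda>q. pcompose q (monom 1 k)) M"

end

theory Submission
  imports Defs
begin

text \<open>The word sigma^(n+1)(i) = sigma^n(sigma(i)) is the concatenation of the blocks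
  sigma^n(l), l running through sigma(i), and every block has length L^n. So an occurrence of l
  carrying weight T^e in sigma(i) shifts the block sigma^n(l) by T^(e L^n), which gives
  beta_{sigma^(n+1)(i), j}(T) = sum_l beta_{sigma(i), l}(T^(L^n)) beta_{sigma^n(l), j}(T),
  i.e. M_{sigma^(n+1)}(T) = M_sigma(T^(L^n)) M_{sigma^n}(T); the product formula follows by
  induction on n. Neither the primality of L = p nor the coefficient field plays a role.\<close>

lemma beta_Nil [simp]: "beta [] j = 0"
  by (simp add: beta_def)

lemma beta_Cons: "beta (x # w) j = (if x = j then monom 1 (length w) else 0) + beta w j"
proof -
  have "(\<Sum>i<length w. if w ! i = j then monom 1 (Suc (length w) - 1 - Suc i) else 0)
      = (\<Sum>i<length w. if w ! i = j then monom 1 (length w - 1 - i) else (0::'a poly))"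
    by (rule sum.cong) (auto simp: diff_diff_left)
  then show ?thesis
    unfolding beta_def length_Cons sum.lessThan_Suc_shift by simp
qed

lemma beta_append: "beta (u @ v) j = beta u j * monom 1 (length v) + beta v j"
  by (induction u) (auto simp: beta_Cons mult_monom algebra_simps)

lemma pcompose_monom_monom:
  "pcompose (monom (1::'a::comm_semiring_1) a) (monom 1 k) = monom 1 (a * k)"
  by (simp add: pcompose_altdef poly_monom map_poly_monom monom_power mult.commute)

lemma funpow_morph_ext_append:
  "(morph_ext \<sigma> ^^ n) (u @ v) = (morph_ext \<sigma> ^^ n) u @ (morph_ext \<sigma> ^^ n) v"
  by (induction n) (simp_all add: morph_ext_def)

lemma funpow_morph_ext_Nil: "(morph_ext \<sigma> ^^ n) [] = []"
  by (induction n) (simp_all add: morph_ext_def)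

lemma funpow_morph_ext_eq_concat:
  "(morph_ext \<sigma> ^^ n) w = concat (map (morph_pow \<sigma> n) w)"
proof (induction w)
  case Nil
  then show ?case by (simp add: funpow_morph_ext_Nil)
next
  case (Cons x w)
  have "(morph_ext \<sigma> ^^ n) ([x] @ w) = morph_pow \<sigma> n x @ (morph_ext \<sigma> ^^ n) w"
    by (simp only: funpow_morph_ext_append morph_pow_def)
  with Cons show ?case by simp
qed

lemma morph_pow_0: "morph_pow \<sigma> 0 i = [i]"
  by (simp add: morph_pow_def)

lemma morph_pow_Suc: "morph_pow \<sigma> (Suc n) i = concat (map (morph_pow \<sigma> n) (\<sigma> i))"
proof -
  have "morph_pow \<sigma> (Suc n) i = (morph_ext \<sigma> ^^ n) (morph_ext \<sigma> [i])"
    unfolding morph_pow_def funpow_Suc_right by simp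
  then show ?thesis
    by (simp add: morph_ext_def funpow_morph_ext_eq_concat)
qed

lemma set_morph_pow_subset:
  assumes "is_morphism m \<sigma>" "i < m"
  shows "set (morph_pow \<sigma> n i) \<subseteq> {..<m}"
  using assms(2)
proof (induction n arbitrary: i)
  case 0
  then show ?case by (simp add: morph_pow_0)
next
  case (Suc n)
  with assms(1) show ?case
    by (fastforce simp: morph_pow_Suc is_morphism_def)
qed

lemma length_morph_pow:
  assumes "is_uniform_morphism m L \<sigma>" "i < m"
  shows "length (morph_pow \<sigma> n i) = L ^ n"
  using assms(2)
proof (induction n arbitrary: i)
  case 0
  then show ?case by (simp add: morph_pow_0)
next
  case (Suc n)
  have "set (\<sigma> i) \<subseteq> {..<m}" "length (\<sigma> i) = L"
    using assms(1) Suc.prems unfolding is_uniform_morphism_def is_morphism_def by auto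
  moreover from this(1) have "map (length \<circ> morph_pow \<sigma> n) (\<sigma> i) = map (\<lambda>_. L ^ n) (\<sigma> i)"
    using Suc.IH by (auto intro!: map_cong)
  ultimately show ?case
    by (simp only: morph_pow_Suc length_concat map_map sum_list_triv) simp
qed

lemma beta_concat_uniform:
  assumes "\<And>x. x \<in> set w \<Longrightarrow> x < m" "\<And>x. x \<in> set w \<Longrightarrow> length (f x) = k"
  shows "(beta (concat (map f w)) j :: 'a::comm_semiring_1 poly)
       = (\<Sum>l<m. pcompose (beta w l) (monom 1 k) * beta (f l) j)"
  using assms
proof (induction w)
  case Nil
  then show ?case by simp
next
  case (Cons x w)
  have "length (concat (map f w)) = k * length w"
    using Cons.prems by (simp add: length_concat sum_list_triv cong: map_cong)
  then have "(beta (concat (map f (x # w))) j :: 'a poly)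
      = monom 1 (length w * k) * beta (f x) j + beta (concat (map f w)) j"
    by (simp add: beta_append mult.commute)
  also have "monom 1 (length w * k) * beta (f x) j
      = (\<Sum>l<m. (if x = l then monom 1 (length w * k) else 0) * beta (f l) j :: 'a poly)"
    using Cons.prems(1) by (simp add: sum.delta if_distrib[of "\<lambda>c. c * _"] cong: if_cong)
  also have "beta (concat (map f w)) j
      = (\<Sum>l<m. pcompose (beta w l) (monom 1 k) * beta (f l) j :: 'a poly)"
    using Cons by simp
  also have "(\<Sum>l<m. (if x = l then monom 1 (length w * k) else 0) * beta (f l) j)
      + (\<Sum>l<m. pcompose (beta w l) (monom 1 k) * beta (f l) j)
      = (\<Sum>l<m. pcompose (beta (x # w) l) (monom 1 k) * beta (f l) j :: 'a poly)"
    unfolding sum.distrib[symmetric]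
    by (rule sum.cong) (auto simp: beta_Cons pcompose_add distrib_right pcompose_monom_monom)
  finally show ?case .
qed

lemma Mmat_morph_pow_0: "(Mmat m (morph_pow \<sigma> 0) :: 'a::comm_semiring_1 poly mat) = 1\<^sub>m m"
  by (rule eq_matI) (auto simp: Mmat_def morph_pow_0 beta_Cons)

lemma Mmat_morph_pow_Suc:
  assumes "is_uniform_morphism m L \<sigma>"
  shows "(Mmat m (morph_pow \<sigma> (Suc n)) :: 'a::comm_semiring_1 poly mat)
       = subst_pow (L ^ n) (Mmat m \<sigma>) * Mmat m (morph_pow \<sigma> n)"
proof (rule eq_matI)
  fix i j
  assume "i < dim_row (subst_pow (L ^ n) (Mmat m \<sigma>) * (Mmat m (morph_pow \<sigma> n) :: 'a poly mat))"
    "j < dim_col (subst_pow (L ^ n) (Mmat m \<sigma>) * (Mmat m (morph_pow \<sigma> n) :: 'a poly mat))"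
  then have i: "i < m" and j: "j < m"
    by (auto simp: Mmat_def subst_pow_def)
  have letters: "x < m" if "x \<in> set (\<sigma> i)" for x
    using assms i that unfolding is_uniform_morphism_def is_morphism_def by auto
  have "(Mmat m (morph_pow \<sigma> (Suc n)) :: 'a poly mat) $$ (i, j)
      = (\<Sum>l<m. pcompose (beta (\<sigma> i) l) (monom 1 (L ^ n)) * beta (morph_pow \<sigma> n l) j)"
    using i j letters length_morph_pow[OF assms]
    by (simp add: Mmat_def morph_pow_Suc beta_concat_uniform)
  also have "\<dots> = (subst_pow (L ^ n) (Mmat m \<sigma>) * Mmat m (morph_pow \<sigma> n)) $$ (i, j)"
    using i j
    by (auto simp: Mmat_def subst_pow_def scalar_prod_def lessThan_atLeast0 intro!: sum.cong)
  finally show "(Mmat m (morph_pow \<sigma> (Suc n)) :: 'a poly mat) $$ (i, j)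
      = (subst_pow (L ^ n) (Mmat m \<sigma>) * Mmat m (morph_pow \<sigma> n)) $$ (i, j)" .
qed (auto simp: Mmat_def subst_pow_def)

lemma Mmat_morph_pow:
  assumes "is_uniform_morphism m L \<sigma>"
  shows "(Mmat m (morph_pow \<sigma> n) :: 'a::comm_semiring_1 poly mat)
       = foldr (\<lambda>k A. subst_pow (L ^ k) (Mmat m \<sigma>) * A) (rev [0..<n]) (1\<^sub>m m)"
  by (induction n) (simp_all add: Mmat_morph_pow_0 Mmat_morph_pow_Suc[OF assms])

theorem corollary4p12:
  fixes p m n :: nat and \<sigma> :: "nat \<Rightarrow> nat list"
  assumes "prime p"
    and "card (UNIV :: 'f set) = p"
    and "is_uniform_morphism m p \<sigma>"
    and "n \<ge> 1"
  shows "(Mmat m (morph_pow \<sigma> n) :: 'f::field poly mat)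
       = foldr (\<lambda>k A. subst_pow (p ^ k) (Mmat m \<sigma>) * A) (rev [0..<n]) (1\<^sub>m m)"
  using assms(3) by (rule Mmat_morph_pow)

end
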